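(* The map $\mathsf{Inc}$ from trees to increasing trees is a section of the forgetful map $\mathsf{Fgt}$ (i.e. $\mathsf{Fgt}(\mathsf{Inc}(T))=T$ for every tree $T$), and its linear extension is an injective morphism of unital algebras $(\overline{\mathcal{T}}_\bullet,\overline{\ast})\to(\mathcal{T}_\bullet,\overline{\ast})$, where $\overline{\ast}$ denotes left grafting on $\overline{\mathcal{T}}_\bullet$ and the restricted product on $\mathcal{T}_\bullet$.
   Context: A (planar rooted) tree is a finite planar rooted tree in which each vertex has one outgoing edge and at least two incoming edges (ordered left to right), incoming edges being leaves or coming from other vertices; $\varepsilon$ is the trivial tree with no vertex. For $m\ge1$, $\bigvee(T_0,\ldots,T_m)$ joins the roots of $T_0,\ldots,T_m$ to a new vertex with a new root; every non-trivial tree is uniquely such a wedge. A vertex with $j+1$ incoming edges carries $j$ branchings (pairs of consecutive incoming edges); the number of branchings is the degree. A level function on $T$ is a surjection $\lambda$ from the vertices onto $[k]=\{1,\ldots,k\}$ strictly increasing along each leaf-to-root path; an increasing tree is a pair $(T,\lambda)$; $\mathsf{Fgt}(T,\lambda)=T$. $\overline{\mathcal{T}}_\bullet$ (resp. $\mathcal{T}_\bullet$) is the free $\mathbb{Z}$-module on trees (resp. increasing trees), graded by number of branchings. Left grafting: $T_1\,\overline{\ast}\,T_2$ is obtained by grafting the root of $T_1$ onto the leftmost leaf of $T_2$ ($\varepsilon$ is the unit). For increasing trees, $(T_1,\lambda_1)\,\overline{\ast}\,(T_2,\lambda_2)$ is the left grafting of the underlying trees, with level $\lambda_1(v)$ on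 vertices of $T_1$ and $k_1+\lambda_2(v)$ on vertices of $T_2$, $k_1$ being the number of levels of $\lambda_1$. $\mathsf{Inc}$ is defined recursively: $\mathsf{Inc}(\varepsilon)=\varepsilon$; if $T=\bigvee(T_0,\ldots,T_m)$ and $\mathsf{Inc}(T_i)=(T_i,\lambda_i)$ with $k_i$ levels, then $\mathsf{Inc}(T)=(T,\lambda)$ where $\lambda(v)=k_0+\cdots+k_{i-1}+\lambda_i(v)$ for vertices $v$ of $T_i$ and the root vertex gets level $k_0+\cdots+k_m+1$. *)

theory Defs
  imports "HOL-Library.Poly_Mapping"
begin

text \<open>A tree is either the trivial tree Leaf (epsilon, also used for the leaves
  below a vertex) or a vertex Node ts whose incoming edges are, from left to right,
  the roots of the subtrees ts (a Leaf child is a leaf edge).\<close>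
datatype tree = Leaf | Node "tree list"

fun valid :: "tree \<Rightarrow> bool" where
  "valid Leaf = True"
| "valid (Node ts) = (2 \<le> length ts \<and> (\<forall>t\<in>set ts. valid t))"

text \<open>Vertices, addressed by their path from the root (list of child indices).\<close>
function verts :: "tree \<Rightarrow> nat list set" where
  "verts Leaf = {}"
| "verts (Node ts) = insert [] (\<Union>i<length ts. (#) i ` verts (ts ! i))"
  by pat_completeness auto
termination
  by (relation "measure size") (auto simp: less_Suc_eq_le intro!: size_list_estimation' nth_mem)

fun graft :: "tree \<Rightarrow> tree \<Rightarrow> tree" where
  "graft s Leaf = s"
| "graft s (Node []) = Node []"
| "graft s (Node (t # ts)) = Node (graft s t # ts)"

fun ldepth :: "tree \<Rightarrow> nat" where
  "ldepth Leaf = 0"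
| "ldepth (Node []) = 0"
| "ldepth (Node (t # ts)) = Suc (ldepth t)"

type_synonym itree = "tree \<times> (nat list \<Rightarrow> nat)"

definition nlevels :: "itree \<Rightarrow> nat" where
  "nlevels X = card (snd X ` verts (fst X))"

text \<open>Increasing tree: a valid tree with a level function that is a surjection of
  the vertices onto {1..k}, strictly increasing from each vertex to its parent
  (i.e. along leaf-to-root paths); normalised to 0 outside the vertices.\<close>
definition is_itree :: "itree \<Rightarrow> bool" where
  "is_itree X = (valid (fst X)
     \<and> (\<exists>k. snd X ` verts (fst X) = {1..k})
     \<and> (\<forall>v i. v @ [i] \<in> verts (fst X) \<longrightarrow> snd X (v @ [i]) < snd X v)
     \<and> (\<forall>v. v \<notin> verts (fst X) \<longrightarrow> snd X v = 0))"

definition Fgt :: "itree \<Rightarrow> tree" where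
  "Fgt X = fst X"

definition itree_unit :: itree where
  "itree_unit = (Leaf, \<lambda>_. 0)"

definition igraft :: "itree \<Rightarrow> itree \<Rightarrow> itree" where
  "igraft X Y = (graft (fst X) (fst Y),
     (\<lambda>v. if take (ldepth (fst Y)) v = replicate (ldepth (fst Y)) 0
             \<and> drop (ldepth (fst Y)) v \<in> verts (fst X)
          then snd X (drop (ldepth (fst Y)) v)
          else if v \<in> verts (fst Y) then nlevels X + snd Y v else 0))"

fun inc_lev :: "tree \<Rightarrow> (nat list \<Rightarrow> nat)" where
  "inc_lev Leaf = (\<lambda>_. 0)"
| "inc_lev (Node ts) =
    (let ls = map inc_lev ts;
         ks = map (\<lambda>(t, l). card (l ` verts t)) (zip ts ls)
     in (\<lambda>v. case v of
               [] \<Rightarrow> sum_list ks + 1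
             | i # p \<Rightarrow> if i < length ts \<and> p \<in> verts (ts ! i)
                        then sum_list (take i ks) + (ls ! i) p else 0))"

definition Inc :: "tree \<Rightarrow> itree" where
  "Inc T = (T, inc_lev T)"

definition Tbar :: "(tree \<Rightarrow>\<^sub>0 int) set" where
  "Tbar = {x. Poly_Mapping.keys x \<subseteq> {T. valid T}}"

definition Tinc :: "(itree \<Rightarrow>\<^sub>0 int) set" where
  "Tinc = {x. Poly_Mapping.keys x \<subseteq> {X. is_itree X}}"

definition bilin_ext :: "('a \<Rightarrow> 'a \<Rightarrow> 'a) \<Rightarrow> ('a \<Rightarrow>\<^sub>0 int) \<Rightarrow> ('a \<Rightarrow>\<^sub>0 int) \<Rightarrow> ('a \<Rightarrow>\<^sub>0 int)" where
  "bilin_ext f x y = frag_extend (\<lambda>a. frag_extend (\<lambda>b. frag_of (f a b)) y) x"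

definition graft_prod :: "(tree \<Rightarrow>\<^sub>0 int) \<Rightarrow> (tree \<Rightarrow>\<^sub>0 int) \<Rightarrow> (tree \<Rightarrow>\<^sub>0 int)" where
  "graft_prod = bilin_ext graft"

definition igraft_prod :: "(itree \<Rightarrow>\<^sub>0 int) \<Rightarrow> (itree \<Rightarrow>\<^sub>0 int) \<Rightarrow> (itree \<Rightarrow>\<^sub>0 int)" where
  "igraft_prod = bilin_ext igraft"

definition Inc_lin :: "(tree \<Rightarrow>\<^sub>0 int) \<Rightarrow> (itree \<Rightarrow>\<^sub>0 int)" where
  "Inc_lin = frag_extend (\<lambda>T. frag_of (Inc T))"

end

theory Submission
  imports Defs
begin

text \<open>The level function of \<open>Inc T\<close> numbers the vertices of \<open>T\<close> in post-order
  (the subtrees from left to right, then the root). Hence its image is \<open>{1..n}\<close>, \<open>n\<close> the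
  number of vertices, and it increases towards the root. Grafting \<open>T\<^sub>1\<close> onto the leftmost
  leaf of \<open>T\<^sub>2\<close> places all vertices of \<open>T\<^sub>1\<close> first in post-order and shifts the numbers of
  the vertices of \<open>T\<^sub>2\<close> by the number of vertices of \<open>T\<^sub>1\<close>, which is precisely the level
  function of the grafted increasing tree. Injectivity holds because the linear extension
  of \<open>Fgt\<close> is a left inverse.\<close>

fun num_verts :: "tree \<Rightarrow> nat" where
  "num_verts Leaf = 0"
| "num_verts (Node ts) = Suc (sum_list (map num_verts ts))"

lemma Nil_in_verts_Node [simp]: "[] \<in> verts (Node ts)"
  by simp

lemma Cons_in_verts_Node [simp]:
  "i # p \<in> verts (Node ts) \<longleftrightarrow> i < length ts \<and> p \<in> verts (ts ! i)"
  by auto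

declare verts.simps [simp del]

lemma verts_Leaf [simp]: "verts Leaf = {}"
  by (simp add: verts.simps)

lemma verts_butlast_closed: "v @ [i] \<in> verts T \<Longrightarrow> v \<in> verts T"
proof (induction T arbitrary: v)
  case (Node ts)
  then show ?case by (cases v) auto
qed simp

lemma UN_consecutive_intervals:
  "(\<Union>i<length ks. {sum_list (take i ks) + 1 .. sum_list (take i ks) + ks ! i})
     = {1 .. sum_list (ks :: nat list)}"
proof (induction ks)
  case (Cons k ks)
  have "(\<Union>i<length (k # ks). {sum_list (take i (k # ks)) + 1 .. sum_list (take i (k # ks)) + (k # ks) ! i})
      = {1..k} \<union> (+) k ` (\<Union>j<length ks. {sum_list (take j ks) + 1 .. sum_list (take j ks) + ks ! j})"
    by (simp add: lessThan_Suc_eq_insert_0 image_UN ac_simps)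
  also have "\<dots> = {1..k} \<union> {k + 1 .. k + sum_list ks}"
    using Cons.IH by (simp add: add.commute)
  finally show ?case by auto
qed simp

declare inc_lev.simps(2) [simp del]

lemma inc_lev_outside_verts: "v \<notin> verts T \<Longrightarrow> inc_lev T v = 0"
  by (cases T; cases v) (auto simp: inc_lev.simps Let_def)

lemma inc_lev_Node_if_card:
  assumes "\<And>t. t \<in> set ts \<Longrightarrow> card (inc_lev t ` verts t) = num_verts t"
  shows "inc_lev (Node ts) = (\<lambda>v. case v of
      [] \<Rightarrow> sum_list (map num_verts ts) + 1
    | i # p \<Rightarrow> if i < length ts \<and> p \<in> verts (ts ! i)
               then sum_list (take i (map num_verts ts)) + inc_lev (ts ! i) p else 0)"
proof -
  have "map (\<lambda>(t, l). card (l ` verts t)) (zip ts (map inc_lev ts)) = map num_verts ts"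
    by (rule nth_equalityI) (auto simp: assms)
  then show ?thesis
    by (simp add: inc_lev.simps Let_def fun_eq_iff split: list.split)
qed

lemma inc_lev_image: "inc_lev T ` verts T = {1 .. num_verts T}"
proof (induction T)
  case (Node ts)
  define ks where "ks = map num_verts ts"
  have lev: "inc_lev (Node ts) = (\<lambda>v. case v of
      [] \<Rightarrow> sum_list ks + 1
    | i # p \<Rightarrow> if i < length ts \<and> p \<in> verts (ts ! i)
               then sum_list (take i ks) + inc_lev (ts ! i) p else 0)"
    unfolding ks_def by (rule inc_lev_Node_if_card) (simp add: Node.IH)
  have "inc_lev (Node ts) ` verts (Node ts) = insert (sum_list ks + 1)
      (\<Union>i<length ts. (+) (sum_list (take i ks)) ` inc_lev (ts ! i) ` verts (ts ! i))"
    by (auto simp: verts.simps lev image_UN image_image)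
  also have "\<dots> = insert (sum_list ks + 1)
      (\<Union>i<length ks. {sum_list (take i ks) + 1 .. sum_list (take i ks) + ks ! i})"
    by (simp add: Node.IH ks_def add.commute)
  also have "\<dots> = {1 .. num_verts (Node ts)}"
    unfolding UN_consecutive_intervals by (auto simp: ks_def)
  finally show ?case .
qed simp

lemma card_inc_lev_image [simp]: "card (inc_lev T ` verts T) = num_verts T"
  by (simp add: inc_lev_image)

lemma inc_lev_Node: "inc_lev (Node ts) = (\<lambda>v. case v of
      [] \<Rightarrow> sum_list (map num_verts ts) + 1
    | i # p \<Rightarrow> if i < length ts \<and> p \<in> verts (ts ! i)
               then sum_list (take i (map num_verts ts)) + inc_lev (ts ! i) p else 0)"
  by (rule inc_lev_Node_if_card) simp

lemma inc_lev_child_less: "v @ [i] \<in> verts T \<Longrightarrow> inc_lev T (v @ [i]) < inc_lev T v"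
proof (induction T arbitrary: v)
  case (Node ts)
  show ?case
  proof (cases v)
    case Nil
    with Node.prems have i: "i < length ts" "[] \<in> verts (ts ! i)" by auto
    then have "inc_lev (ts ! i) [] \<le> num_verts (ts ! i)"
      using inc_lev_image [of "ts ! i"] by auto
    moreover have "sum_list (take (Suc i) (map num_verts ts)) \<le> sum_list (map num_verts ts)"
      by (metis append_take_drop_id le_add1 sum_list_append)
    ultimately show ?thesis
      using Nil i by (simp add: inc_lev_Node take_Suc_conv_app_nth)
  next
    case (Cons j p)
    with Node.prems have j: "j < length ts" "p @ [i] \<in> verts (ts ! j)" by auto
    then show ?thesis
      using Cons Node.IH verts_butlast_closed by (simp add: inc_lev_Node)
  qed
qed simp

lemma is_itree_Inc: "valid T \<Longrightarrow> is_itree (Inc T)"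
  unfolding is_itree_def Inc_def
  using inc_lev_image inc_lev_child_less inc_lev_outside_verts by auto

lemma Fgt_Inc: "Fgt (Inc T) = T"
  by (simp add: Fgt_def Inc_def)

lemma Inc_Leaf: "Inc Leaf = itree_unit"
  by (simp add: Inc_def itree_unit_def)

lemma num_verts_graft: "valid t \<Longrightarrow> num_verts (graft s t) = num_verts s + num_verts t"
proof (induction t)
  case (Node ts)
  then obtain u us where "ts = u # us"
    by (cases ts) auto
  with Node show ?case by simp
qed simp

lemma Inc_graft: "valid t \<Longrightarrow> Inc (graft s t) = igraft (Inc s) (Inc t)"
proof (induction t)
  case Leaf
  then show ?case
    by (auto simp: Inc_def igraft_def fun_eq_iff inc_lev_outside_verts)
next
  case (Node ts)
  then obtain u us where ts: "ts = u # us" and "valid u"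
    by (cases ts) auto
  then have "Inc (graft s u) = igraft (Inc s) (Inc u)"
    using Node.IH by simp
  then have IH: "inc_lev (graft s u) = snd (igraft (Inc s) (Inc u))"
    by (metis Inc_def snd_conv)
  have "inc_lev (graft s (Node ts)) v = snd (igraft (Inc s) (Inc (Node ts))) v" for v
  proof (cases v)
    case Nil
    then show ?thesis
      using ts \<open>valid u\<close> by (simp add: inc_lev_Node igraft_def Inc_def nlevels_def num_verts_graft)
  next
    case (Cons i p)
    show ?thesis
    proof (cases i)
      case 0
      have "inc_lev (graft s (Node ts)) v = inc_lev (graft s u) p"
        using Cons 0 ts inc_lev_outside_verts [of p "graft s u"] by (auto simp: inc_lev_Node)
      also have "\<dots> = snd (igraft (Inc s) (Inc (Node ts))) v"
        using Cons 0 ts by (simp add: IH igraft_def Inc_def inc_lev_Node nlevels_def)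
      finally show ?thesis .
    next
      case (Suc j)
      then show ?thesis
        using Cons ts \<open>valid u\<close>
        by (simp add: igraft_def Inc_def inc_lev_Node nlevels_def num_verts_graft)
    qed
  qed
  then show ?case
    by (simp add: Inc_def igraft_def fun_eq_iff ts)
qed

lemma frag_extend_frag_extend:
  "frag_extend f (frag_extend g c) = frag_extend (\<lambda>a. frag_extend f (g a)) c"
  using subset_UNIV by (induction c rule: frag_induction) (auto simp: frag_extend_diff)

lemma Inc_lin_in_Tinc: "x \<in> Tbar \<Longrightarrow> Inc_lin x \<in> Tinc"
  unfolding Tbar_def Tinc_def Inc_lin_def
  using keys_frag_extend [of "\<lambda>T. frag_of (Inc T)" x] is_itree_Inc by fastforce

lemma Inc_lin_add: "Inc_lin (x + y) = Inc_lin x + Inc_lin y"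
  by (simp add: Inc_lin_def frag_extend_add)

lemma Inc_lin_graft_prod:
  assumes "x \<in> Tbar" "y \<in> Tbar"
  shows "Inc_lin (graft_prod x y) = igraft_prod (Inc_lin x) (Inc_lin y)"
proof -
  have "Inc_lin (graft_prod x y) = frag_extend (\<lambda>a. frag_extend (\<lambda>b. frag_of (Inc (graft a b))) y) x"
    by (simp add: graft_prod_def bilin_ext_def Inc_lin_def frag_extend_frag_extend)
  also have "\<dots> = frag_extend (\<lambda>a. frag_extend (\<lambda>b. frag_of (igraft (Inc a) (Inc b))) y) x"
    using assms unfolding Tbar_def by (intro frag_extend_eq) (auto simp: Inc_graft)
  also have "\<dots> = igraft_prod (Inc_lin x) (Inc_lin y)"
    by (simp add: igraft_prod_def bilin_ext_def Inc_lin_def frag_extend_frag_extend)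
  finally show ?thesis .
qed

lemma Fgt_lin_Inc_lin: "frag_extend (frag_of \<circ> Fgt) (Inc_lin x) = x"
proof -
  have "frag_extend (frag_of \<circ> Fgt) (Inc_lin x) = frag_extend (frag_of \<circ> Fgt \<circ> Inc) x"
    by (simp add: Inc_lin_def frag_extend_compose flip: comp_def [of frag_of Inc])
  also have "\<dots> = x"
    by (simp add: comp_def Fgt_Inc flip: frag_expansion)
  finally show ?thesis .
qed

theorem lemma4p5:
  shows "(\<forall>T. valid T \<longrightarrow> is_itree (Inc T) \<and> Fgt (Inc T) = T)
    \<and> (\<forall>x\<in>Tbar. Inc_lin x \<in> Tinc)
    \<and> (\<forall>x\<in>Tbar. \<forall>y\<in>Tbar. Inc_lin (x + y) = Inc_lin x + Inc_lin y)
    \<and> (\<forall>x\<in>Tbar. \<forall>y\<in>Tbar. Inc_lin (graft_prod x y) = igraft_prod (Inc_lin x) (Inc_lin y))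
    \<and> Inc_lin (frag_of Leaf) = frag_of itree_unit
    \<and> inj_on Inc_lin Tbar"
proof (intro conjI ballI allI impI)
  show "inj_on Inc_lin Tbar"
    using Fgt_lin_Inc_lin by (rule inj_on_inverseI)
qed (simp_all add: is_itree_Inc Fgt_Inc Inc_lin_in_Tinc Inc_lin_add Inc_lin_graft_prod,
    simp add: Inc_lin_def Inc_Leaf)

end
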